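(* Let $(X,\|\cdot\|)$ be a Banach space, $B_X=\{x\in X:\|x\|\le1\}$ and $B=\{x\in X:\|x\|\ge2\}$. Suppose the ordered pair $(B_X,B)$ has the $UC$ property. If $\{x_n\}_{n=1}^\infty,\{z_n\}_{n=1}^\infty\subset B_X$ satisfy $\lim_{n\to\infty}\left\|\frac{x_n+z_n}{2}\right\|=1$, then $\lim_{n\to\infty}\|x_n-z_n\|=0$.
   Context: $\mathrm{dist}(A,B)=\inf\{\|a-b\|:a\in A,b\in B\}$. The ordered pair $(A,B)$ has the $UC$ property if for all sequences $\{x_n\},\{z_n\}\subset A$, $\{y_n\}\subset B$ with $\lim_n\|x_n-y_n\|=\lim_n\|z_n-y_n\|=\mathrm{dist}(A,B)$ one has $\lim_n\|x_n-z_n\|=0$. *)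

theory Defs
  imports "HOL-Analysis.Analysis"
begin

definition set_dist :: "'a::real_normed_vector set \<Rightarrow> 'a set \<Rightarrow> real" where
  "set_dist A B = Inf {norm (a - b) | a b. a \<in> A \<and> b \<in> B}"

definition UC_property :: "'a::real_normed_vector set \<Rightarrow> 'a set \<Rightarrow> bool" where
  "UC_property A B \<longleftrightarrow>
     (\<forall>x z y :: nat \<Rightarrow> 'a.
        (\<forall>n. x n \<in> A) \<longrightarrow> (\<forall>n. z n \<in> A) \<longrightarrow> (\<forall>n. y n \<in> B) \<longrightarrow>
        (\<lambda>n. norm (x n - y n)) \<longlonglongrightarrow> set_dist A B \<longrightarrow>
        (\<lambda>n. norm (z n - y n)) \<longlonglongrightarrow> set_dist A B \<longrightarrow>
        (\<lambda>n. norm (x n - z n)) \<longlonglongrightarrow> 0)"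

end

theory Submission
  imports Defs
begin

text \<open>
  Put \<open>y\<^sub>n = 2 sgn (x\<^sub>n + z\<^sub>n)\<close>, the radial projection of \<open>x\<^sub>n + z\<^sub>n\<close> onto the sphere of
  radius 2. Since \<open>y\<^sub>n - x\<^sub>n = z\<^sub>n - (\<parallel>x\<^sub>n + z\<^sub>n\<parallel> - 2) sgn (x\<^sub>n + z\<^sub>n)\<close>, we get
  \<open>\<parallel>x\<^sub>n - y\<^sub>n\<parallel> \<le> 1 + \<bar>\<parallel>x\<^sub>n + z\<^sub>n\<parallel> - 2\<bar> \<rightarrow> 1\<close>, and symmetrically for \<open>z\<^sub>n\<close>. As the distance
  between the unit ball and the exterior of the ball of radius 2 is exactly 1, the
  \<open>UC\<close> property applied to \<open>x\<^sub>n, z\<^sub>n, y\<^sub>n\<close> gives \<open>\<parallel>x\<^sub>n - z\<^sub>n\<parallel> \<rightarrow> 0\<close>.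
\<close>

lemma norm_diff_ge_radius_gap:
  fixes x y :: "'a::real_normed_vector"
  assumes "norm x \<le> r" and "norm y \<ge> s"
  shows "s - r \<le> norm (x - y)"
  using norm_triangle_ineq2[of y x] assms by (simp add: norm_minus_commute)

lemma set_dist_ball_exterior:
  fixes a :: "'a::real_normed_vector"
  assumes "a \<noteq> 0" and "0 \<le> r" and "r \<le> s"
  shows "set_dist {v :: 'a. norm v \<le> r} {v. norm v \<ge> s} = s - r"
  unfolding set_dist_def
proof (rule cInf_eq_minimum)
  have "s - r = norm (r *\<^sub>R sgn a - s *\<^sub>R sgn a)"
    using assms by (simp add: norm_sgn flip: scaleR_diff_left)
  moreover have "norm (r *\<^sub>R sgn a) \<le> r" "norm (s *\<^sub>R sgn a) \<ge> s"
    using assms by (simp_all add: norm_sgn)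
  ultimately show "s - r \<in> {norm (u - v) |u v. u \<in> {v :: 'a. norm v \<le> r} \<and> v \<in> {v. norm v \<ge> s}}"
    by blast
next
  fix t assume "t \<in> {norm (u - v) |u v. u \<in> {v :: 'a. norm v \<le> r} \<and> v \<in> {v. norm v \<ge> s}}"
  then obtain u v :: 'a where "t = norm (u - v)" "norm u \<le> r" "norm v \<ge> s"
    by blast
  then show "s - r \<le> t"
    using norm_diff_ge_radius_gap by blast
qed

text \<open>No assumption on \<open>x\<close> is needed, and the case \<open>x + z = 0\<close> is covered since \<open>sgn 0 = 0\<close>.\<close>

lemma norm_diff_radial_projection_le:
  fixes x z :: "'a::real_normed_vector"
  assumes "norm z \<le> 1"
  shows "norm (x - 2 *\<^sub>R sgn (x + z)) \<le> 1 + \<bar>norm (x + z) - 2\<bar>"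
proof -
  have "x + z = norm (x + z) *\<^sub>R sgn (x + z)"
    by (cases "x + z = 0") (simp_all add: sgn_div_norm)
  then have "x - 2 *\<^sub>R sgn (x + z) = - z + (norm (x + z) - 2) *\<^sub>R sgn (x + z)"
    by (simp add: algebra_simps)
  also have "norm \<dots> \<le> norm z + \<bar>norm (x + z) - 2\<bar> * norm (sgn (x + z))"
    by (rule order_trans[OF norm_triangle_ineq]) simp
  also have "\<dots> \<le> 1 + \<bar>norm (x + z) - 2\<bar>"
    using assms by (simp add: norm_sgn)
  finally show ?thesis .
qed

lemma tendsto_norm_diff_radial_projection:
  fixes x z y :: "nat \<Rightarrow> 'a::real_normed_vector"
  assumes "\<forall>n. norm (x n) \<le> 1" and "\<forall>n. norm (z n) \<le> 1" and "\<forall>n. norm (y n) \<ge> 2"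
    and "(\<lambda>n. norm (x n + z n)) \<longlonglongrightarrow> 2"
    and "eventually (\<lambda>n. y n = 2 *\<^sub>R sgn (x n + z n)) sequentially"
  shows "(\<lambda>n. norm (x n - y n)) \<longlonglongrightarrow> 1"
proof (rule tendsto_sandwich[OF _ _ tendsto_const])
  have "1 \<le> norm (x n - y n)" for n
    using norm_diff_ge_radius_gap[where r = 1 and s = 2] assms(1,3) by fastforce
  then show "eventually (\<lambda>n. 1 \<le> norm (x n - y n)) sequentially"
    by simp
  show "eventually (\<lambda>n. norm (x n - y n) \<le> 1 + \<bar>norm (x n + z n) - 2\<bar>) sequentially"
    using assms(5) by eventually_elim (use norm_diff_radial_projection_le assms(2) in auto)
  have "(\<lambda>n. 1 + \<bar>norm (x n + z n) - 2\<bar>) \<longlonglongrightarrow> 1 + \<bar>2 - 2\<bar>"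
    by (intro tendsto_intros assms(4))
  then show "(\<lambda>n. 1 + \<bar>norm (x n + z n) - 2\<bar>) \<longlonglongrightarrow> 1"
    by simp
qed

theorem mainTheorem11:
  fixes x z :: "nat \<Rightarrow> 'a::banach"
  assumes "UC_property {v :: 'a. norm v \<le> 1} {v. norm v \<ge> 2}"
    and "\<forall>n. norm (x n) \<le> 1" and "\<forall>n. norm (z n) \<le> 1"
    and "(\<lambda>n. norm ((x n + z n) /\<^sub>R 2)) \<longlonglongrightarrow> 1"
  shows "(\<lambda>n. norm (x n - z n)) \<longlonglongrightarrow> 0"
proof -
  have "(\<lambda>n. 2 * norm ((x n + z n) /\<^sub>R 2)) \<longlonglongrightarrow> 2 * 1"
    by (intro tendsto_intros assms(4))
  then have sum_lim: "(\<lambda>n. norm (x n + z n)) \<longlonglongrightarrow> 2"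
    by simp
  have "eventually (\<lambda>n. norm (x n + z n) > 0) sequentially"
    using order_tendstoD(1)[OF sum_lim, of 0] by simp
  then have sum_nonzero: "eventually (\<lambda>n. x n + z n \<noteq> 0) sequentially"
    by (rule eventually_mono) simp
  then obtain n\<^sub>0 where "x n\<^sub>0 + z n\<^sub>0 \<noteq> 0"
    unfolding eventually_sequentially by blast
  define y where "y n = 2 *\<^sub>R sgn (if x n + z n = 0 then x n\<^sub>0 + z n\<^sub>0 else x n + z n)" for n
  have y_norm: "\<forall>n. norm (y n) \<ge> 2"
    using \<open>x n\<^sub>0 + z n\<^sub>0 \<noteq> 0\<close> by (simp add: y_def norm_sgn)
  have y_eq: "eventually (\<lambda>n. y n = 2 *\<^sub>R sgn (x n + z n)) sequentially"
    using sum_nonzero by (rule eventually_mono) (simp add: y_def)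
  have "(\<lambda>n. norm (x n - y n)) \<longlonglongrightarrow> 1"
    using tendsto_norm_diff_radial_projection[OF assms(2,3) y_norm sum_lim y_eq] .
  moreover have "(\<lambda>n. norm (z n - y n)) \<longlonglongrightarrow> 1"
    using tendsto_norm_diff_radial_projection[OF assms(3,2) y_norm] sum_lim y_eq
    by (simp only: add.commute)
  moreover have "set_dist {v :: 'a. norm v \<le> 1} {v. norm v \<ge> 2} = 1"
    using set_dist_ball_exterior[OF \<open>x n\<^sub>0 + z n\<^sub>0 \<noteq> 0\<close>, of 1 2] by simp
  ultimately show ?thesis
    using assms(1)[unfolded UC_property_def, rule_format, of x z y] assms(2,3) y_norm by simp
qed

end
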